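(* Let $\mathcal{X}$ be a domain, $\mathcal{H}\subseteq\{\pm1\}^{\mathcal{X}}$ a class of experts, $T,N\in\mathbb{N}$, $\gamma>0$. Let $\mathcal{W}_1,\ldots,\mathcal{W}_N$ be $(\gamma,T)$-agnostic weak online learners for $\mathcal{H}$ with regret $R_{\mathcal{W}}(T)$, and let $\mathcal{A}$ be a $([-1,1],N)$-OCO algorithm with regret $R_{\mathcal{A}}(N)$. Run the following algorithm (Online Agnostic Boosting with OCO) on any sequence of examples $(x_1,y_1),\ldots,(x_T,y_T)\in\mathcal{X}\times\{\pm1\}$: for $t=1,\ldots,T$: (1) receive $x_t$ and predict $\hat y_t=\Pi\big(\frac{1}{\gamma N}\sum_{i=1}^N\mathcal{W}_i(x_t)\big)$; (2) for $i=1,\ldots,N$: set $p^1_t=0$ and, if $i>1$, $p^i_t=\mathcal{A}(\ell^1_t,\ldots,\ell^{i-1}_t)\in[-1,1]$ (the point played by a fresh run of $\mathcal{A}$ after observing losses $\ell^1_t,\ldots,\ell^{i-1}_t$); set the loss $\ell^i_t(p)=p\big(\frac1\gamma\mathcal{W}_i(x_t)y_t-1\big)$; pass $(x_t,y^i_t)$ to $\mathcal{W}_i$, where $y^i_t$ is a random label with $\Pr[y^i_t=y_t]=\frac{1+p^i_t}{2}$ and $y^i_t=-y_t$ otherwise. Then \[ \frac1T\,\mathbb{E}\Big[\max_{h^*\in\mathcal{H}}\sum_{t=1}^T h^*(x_t)y_t-\sum_{t=1}^T\hat y_t y_t\Big]\le\frac{R_{\mathcal{W}}(T)}{\gamma T}+\frac{R_{\mathcal{A}}(N)}{N},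 \] where the expectation is with respect to the randomness of the algorithm and of the weak learners.
   Context: Online learning protocol: in each round the learner observes $x_t$, outputs a prediction, then observes $y_t$; $\mathcal{W}(x_t)\in\{\pm1\}$ denotes the prediction of online learner $\mathcal{W}$ at round $t$ given its internal state (which is updated by the examples passed to it). Definition ($(\gamma,T)$-AWOL): an online learning algorithm $\mathcal{W}$ is a $(\gamma,T)$-agnostic weak online learner for $\mathcal{H}$ if for any sequence $(x_1,y_1),\ldots,(x_T,y_T)\in\mathcal{X}\times\{\pm1\}$ fed to it, it outputs $\mathcal{W}(x_t)\in\{\pm1\}$ with $\mathbb{E}[\sum_{t=1}^T\mathcal{W}(x_t)y_t]\ge\gamma\max_{h\in\mathcal{H}}\mathbb{E}[\sum_{t=1}^T h(x_t)y_t]-R_{\mathcal{W}}(T)$, expectation over the randomness of $\mathcal{W}$ and of the possibly adaptive adversary, where $R_{\mathcal{W}}:\mathbb{N}\to\mathbb{R}_+$ is non-decreasing and sublinear. Online convex optimization: a $(\mathcal{K},N)$-OCO algorithm, for a compact convex $\mathcal{K}\subset\mathbb{R}^d$, at each iteration $i=1,\ldots,N$ chooses $p^i\in\mathcal{K}$ based on previously revealed losses, after which an adversary reveals a bounded convex loss $\ell^i$ on $\mathcal{K}$; its regret $R_{\mathcal{A}}(N)$ is (an upper bound, valid for all such loss sequences, on) $\sum_{i=1}^N\ell^i(p^i)-\min_{p\in\mathcal{K}}\sum_{i=1}^N\ell^i(p)$. Randomized projection: for $z\in\mathbb{R}$, $\Pi(z)=\mathrm{sign}(z)$ if $|z|\ge1$;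 otherwise $\Pi(z)=+1$ with probability $\frac{1+z}{2}$ and $-1$ with probability $\frac{1-z}{2}$. *)

theory Defs
  imports "HOL-Probability.Probability"
begin

text \<open>An online learner with state space 's: a random initial state, a prediction
  that is determined by the current internal state, and a (randomized) update of the
  state after an example (x_t, y_t) is passed to it.\<close>
record ('s, 'x) learner =
  lr_init :: "'s pmf"
  lr_pred :: "'s \<Rightarrow> 'x \<Rightarrow> real"
  lr_upd  :: "'s \<Rightarrow> 'x \<Rightarrow> real \<Rightarrow> 's pmf"

text \<open>Transcript entries: (x_t, y_t, prediction of the learner at round t).\<close>
type_synonym 'x transcript = "('x \<times> real \<times> real) list"

type_synonym 'x adversary = "'x transcript \<Rightarrow> ('x \<times> real) pmf"

definition valid_adversary :: "'x adversary \<Rightarrow> bool" where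
  "valid_adversary adv \<longleftrightarrow> (\<forall>h. snd ` set_pmf (adv h) \<subseteq> {-1, 1})"

primrec interact :: "('s, 'x, 'z) learner_scheme \<Rightarrow> 'x adversary \<Rightarrow> nat \<Rightarrow> ('s \<times> 'x transcript) pmf" where
  "interact W adv 0 = map_pmf (\<lambda>s. (s, [])) (lr_init W)"
| "interact W adv (Suc n) =
     interact W adv n \<bind> (\<lambda>(s, h). adv h \<bind> (\<lambda>(x, y).
        map_pmf (\<lambda>s'. (s', h @ [(x, y, lr_pred W s x)])) (lr_upd W s x y)))"

definition sublinear :: "(nat \<Rightarrow> real) \<Rightarrow> bool" where
  "sublinear R \<longleftrightarrow> ((\<lambda>n. R n / real n) \<longlonglongrightarrow> 0)"

definition awol :: "('s, 'x, 'z) learner_scheme \<Rightarrow> real \<Rightarrow> nat \<Rightarrow> (nat \<Rightarrow> real) \<Rightarrow> ('x \<Rightarrow> real) set \<Rightarrow> bool" where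
  "awol W \<gamma> T R H \<longleftrightarrow>
     (\<forall>s x. lr_pred W s x \<in> {-1, 1}) \<and>
     (\<forall>n. 0 \<le> R n) \<and> mono R \<and> sublinear R \<and>
     (\<forall>adv. valid_adversary adv \<longrightarrow>
        measure_pmf.expectation (interact W adv T) (\<lambda>(s, h). \<Sum>(x, y, w)\<leftarrow>h. w * y)
        \<ge> \<gamma> * (SUP c\<in>H. measure_pmf.expectation (interact W adv T) (\<lambda>(s, h). \<Sum>(x, y, w)\<leftarrow>h. c x * y))
          - R T)"

text \<open>A deterministic OCO algorithm on K = [-1,1]: the point it plays after having seen
  the losses ls.\<close>
definition oco :: "((real \<Rightarrow> real) list \<Rightarrow> real) \<Rightarrow> nat \<Rightarrow> real \<Rightarrow> real \<Rightarrow> bool" where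
  "oco A N R B \<longleftrightarrow>
     (\<forall>ls. A ls \<in> {-1..1}) \<and>
     (\<forall>ls. length ls = N \<longrightarrow>
        (\<forall>l\<in>set ls. convex_on {-1..1} l \<and> (\<forall>p\<in>{-1..1}. \<bar>l p\<bar> \<le> B)) \<longrightarrow>
        (\<Sum>i<N. (ls ! i) (A (take i ls))) - (INF p\<in>{-1..1}. \<Sum>i<N. (ls ! i) p) \<le> R)"

definition proj_pmf :: "real \<Rightarrow> real pmf" where
  "proj_pmf z = (if \<bar>z\<bar> \<ge> 1 then return_pmf (sgn z)
                 else map_pmf (\<lambda>b. if b then 1 else -1) (bernoulli_pmf ((1 + z) / 2)))"

definition relabel_pmf :: "real \<Rightarrow> real \<Rightarrow> real pmf" where
  "relabel_pmf p y = map_pmf (\<lambda>b. if b then y else - y) (bernoulli_pmf ((1 + p) / 2))"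

definition boost_loss :: "real \<Rightarrow> real \<Rightarrow> real \<Rightarrow> real \<Rightarrow> real" where
  "boost_loss \<gamma> w y = (\<lambda>p. p * (w * y / \<gamma> - 1))"

text \<open>The point p^i_t (learners indexed 1..N; w i = W_i(x_t)).\<close>
definition boost_point :: "((real \<Rightarrow> real) list \<Rightarrow> real) \<Rightarrow> real \<Rightarrow> (nat \<Rightarrow> real) \<Rightarrow> real \<Rightarrow> nat \<Rightarrow> real" where
  "boost_point A \<gamma> w y i =
     (if i = 1 then 0 else A (map (\<lambda>j. boost_loss \<gamma> (w j) y) [1..<i]))"

definition boost_round ::
  "(nat \<Rightarrow> ('s, 'x, 'z) learner_scheme) \<Rightarrow> ((real \<Rightarrow> real) list \<Rightarrow> real) \<Rightarrow> real \<Rightarrow> nat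
    \<Rightarrow> 'x \<Rightarrow> real \<Rightarrow> (nat \<Rightarrow> 's) \<Rightarrow> ((nat \<Rightarrow> 's) \<times> real) pmf" where
  "boost_round W A \<gamma> N x y S =
     (let w = (\<lambda>i. lr_pred (W i) (S i) x) in
      pair_pmf
        (Pi_pmf {1..N} undefined
           (\<lambda>i. relabel_pmf (boost_point A \<gamma> w y i) y \<bind> (\<lambda>yi. lr_upd (W i) (S i) x yi)))
        (proj_pmf ((1 / (\<gamma> * real N)) * (\<Sum>i=1..N. w i))))"

text \<open>Running the algorithm on (x_1,y_1),...,(x_n,y_n): distribution of
  (learner states, \<Sum>_{t\<le>n} yhat_t * y_t).\<close>
primrec boost_run ::
  "(nat \<Rightarrow> ('s, 'x, 'z) learner_scheme) \<Rightarrow> ((real \<Rightarrow> real) list \<Rightarrow> real) \<Rightarrow> real \<Rightarrow> nat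
    \<Rightarrow> (nat \<Rightarrow> 'x) \<Rightarrow> (nat \<Rightarrow> real) \<Rightarrow> nat \<Rightarrow> ((nat \<Rightarrow> 's) \<times> real) pmf" where
  "boost_run W A \<gamma> N xs ys 0 =
     map_pmf (\<lambda>S. (S, 0)) (Pi_pmf {1..N} undefined (\<lambda>i. lr_init (W i)))"
| "boost_run W A \<gamma> N xs ys (Suc n) =
     boost_run W A \<gamma> N xs ys n \<bind> (\<lambda>(S, acc).
       map_pmf (\<lambda>(S', yhat). (S', acc + yhat * ys (Suc n)))
         (boost_round W A \<gamma> N (xs (Suc n)) (ys (Suc n)) S))"

end

theory Submission
  imports Defs
begin

(*
  In round t the OCO algorithm is run on the linear losses l_i(p) = p (W_i(x_t) y_t / gamma - 1).
  Their sum is N p (z y_t - 1) for the unclipped vote z = (1 / (gamma N)) sum_i W_i(x_t), so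
  competing with the best fixed point p = -sgn(z y_t - 1) bounds |1 - z y_t| by the regret, and
  the randomized projection has expected margin
    E[yhat_t y_t] >= 1 - |1 - z y_t| >= 1 - R_A(N) / N + (1 / N) sum_i l_i(p_i).
  For a fixed weak learner W_i, the points p_i of all rounds are determined by the learners
  before it, whose randomness is independent of that of W_i.  Conditionally on these points,
  W_i faces an oblivious adversary that labels x_t by y_t with probability (1 + p_i)/2, and
  its guarantee against an expert h yields, since p_i <= 1 and h(x_t) y_t - 1 <= 0,
    E[sum_t l_i(p_i)] >= sum_t (h(x_t) y_t - 1) - R_W(T) / gamma.
  Averaging over i and summing over t gives the bound.
*)

section \<open>Expectations under probability mass functions\<close>

lemma integrable_measure_pmf_bounded:
  fixes f :: "'a \<Rightarrow> real"
  assumes "\<And>x. x \<in> set_pmf M \<Longrightarrow> \<bar>f x\<bar> \<le> B"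
  shows "integrable (measure_pmf M) f"
  using assms by (intro measure_pmf.integrable_const_bound[where B=B]) (auto intro: AE_pmfI)

lemma abs_expectation_pmf_le:
  fixes f :: "'a \<Rightarrow> real"
  assumes "\<And>x. x \<in> set_pmf M \<Longrightarrow> \<bar>f x\<bar> \<le> B"
  shows "\<bar>measure_pmf.expectation M f\<bar> \<le> B"
proof -
  have "\<bar>measure_pmf.expectation M f\<bar> \<le> measure_pmf.expectation M (\<lambda>x. \<bar>f x\<bar>)"
    by (rule integral_abs_bound)
  also have "\<dots> \<le> B"
    using assms by (intro measure_pmf.integral_le_const integrable_measure_pmf_bounded[where B=B] AE_pmfI) auto
  finally show ?thesis .
qed

lemma expectation_bind_pmf:
  fixes f :: "'b \<Rightarrow> real"
  assumes bounded: "\<And>y. y \<in> set_pmf (M \<bind> K) \<Longrightarrow> \<bar>f y\<bar> \<le> B"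
  shows "measure_pmf.expectation (M \<bind> K) f = measure_pmf.expectation M (\<lambda>x. measure_pmf.expectation (K x) f)"
proof -
  \<comment> \<open>\<open>integral_bind\<close> needs a bound on the whole space, so cut \<open>f\<close> down to the support\<close>
  define g where "g y = (if y \<in> set_pmf (M \<bind> K) then f y else 0)" for y
  obtain y0 where "y0 \<in> set_pmf (M \<bind> K)"
    using set_pmf_not_empty[of "M \<bind> K"] by blast
  then have "0 \<le> B"
    using bounded[of y0] by linarith
  then have g_bounded: "\<bar>g y\<bar> \<le> B" for y
    using bounded[of y] by (auto simp: g_def)
  have "measure_pmf.expectation (M \<bind> K) f = measure_pmf.expectation (M \<bind> K) g"
    by (intro integral_cong_AE) (auto simp: g_def AE_measure_pmf_iff)
  also have "\<dots> = measure_pmf.expectation M (\<lambda>x. measure_pmf.expectation (K x) g)"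
    unfolding measure_pmf_bind using g_bounded measure_pmf_in_subprob_algebra
    by (intro integral_bind[where B=B and B'=1 and K="count_space UNIV"]) auto
  also have "\<dots> = measure_pmf.expectation M (\<lambda>x. measure_pmf.expectation (K x) f)"
    by (intro integral_cong_AE) (auto simp: g_def AE_measure_pmf_iff intro!: integral_cong_AE)
  finally show ?thesis .
qed

lemma expectation_affine_pmf:
  fixes a c :: real
  assumes "\<And>v. v \<in> set_pmf M \<Longrightarrow> \<bar>v\<bar> \<le> B"
  shows "measure_pmf.expectation M (\<lambda>v. a + v * c) = a + measure_pmf.expectation M (\<lambda>v. v) * c"
proof -
  have "integrable (measure_pmf M) (\<lambda>v. v)"
    using assms by (rule integrable_measure_pmf_bounded)
  then show ?thesis by simp
qed

lemma Pi_pmf_restrict_component: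
  assumes "finite J" "I \<subseteq> J" "i \<in> J - I"
  shows "map_pmf (\<lambda>S. (restrict S I, S i)) (Pi_pmf J undefined p) = pair_pmf (Pi_pmf I undefined p) (p i)"
proof -
  have finite: "finite I" "finite (J - I)"
    using assms finite_subset by auto
  have split: "Pi_pmf J undefined p =
      map_pmf (\<lambda>(f, g) x. if x \<in> I then f x else g x)
        (pair_pmf (Pi_pmf I undefined p) (Pi_pmf (J - I) undefined p))"
    using Pi_pmf_union[OF finite Diff_disjoint, of undefined p] assms(2) by (simp add: Un_absorb1)
  have "map_pmf (\<lambda>S. (restrict S I, S i)) (Pi_pmf J undefined p) =
        map_pmf (\<lambda>(f, g). (f, g i)) (pair_pmf (Pi_pmf I undefined p) (Pi_pmf (J - I) undefined p))"
    unfolding pmf.map_comp split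
  proof (intro map_pmf_cong refl)
    fix x assume x: "x \<in> set_pmf (pair_pmf (Pi_pmf I undefined p) (Pi_pmf (J - I) undefined p))"
    obtain f g where fg: "x = (f, g)" by (cases x)
    have "\<forall>y. y \<notin> I \<longrightarrow> f y = undefined"
      using x set_Pi_pmf_subset[OF finite(1), of undefined p] by (auto simp: fg set_pair_pmf)
    then show "((\<lambda>S. (restrict S I, S i)) \<circ> (\<lambda>(f, g) x. if x \<in> I then f x else g x)) x =
        (\<lambda>(f, g). (f, g i)) x"
      using assms(3) by (auto simp: fg restrict_def fun_eq_iff)
  qed
  also have "\<dots> = pair_pmf (Pi_pmf I undefined p) (map_pmf (\<lambda>g. g i) (Pi_pmf (J - I) undefined p))"
    using map_pair[of "\<lambda>f. f" "\<lambda>g. g i"] by simp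
  also have "\<dots> = pair_pmf (Pi_pmf I undefined p) (p i)"
    using assms finite by (simp add: Pi_pmf_component)
  finally show ?thesis .
qed

lemma abs_sum_list_le_length:
  fixes f :: "'a \<Rightarrow> real"
  shows "\<forall>e\<in>set es. \<bar>f e\<bar> \<le> 1 \<Longrightarrow> \<bar>\<Sum>e\<leftarrow>es. f e\<bar> \<le> length es"
  by (induction es) (auto simp: abs_le_iff)

lemma length_interact: "x \<in> set_pmf (interact W adv n) \<Longrightarrow> length (snd x) = n"
  by (induction n arbitrary: x) auto

lemma interact_transcript_pm1:
  assumes "valid_adversary adv" and "\<And>s x. lr_pred W s x \<in> {-1, 1}"
    and "z \<in> set_pmf (interact W adv n)" and "(x, y, w) \<in> set (snd z)"
  shows "y \<in> {-1, 1} \<and> w \<in> {-1, 1}"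
  using assms(3,4)
proof (induction n arbitrary: z)
  case (Suc n)
  then obtain s h x' y' s' where sh: "(s, h) \<in> set_pmf (interact W adv n)"
    and xy: "(x', y') \<in> set_pmf (adv h)" and z: "z = (s', h @ [(x', y', lr_pred W s x')])"
    by auto
  have "y' \<in> {-1, 1}"
    using assms(1) xy unfolding valid_adversary_def by force
  then show ?case
    using Suc.prems(2) Suc.IH[OF sh] assms(2)[of s x'] by (auto simp: z)
qed auto

section \<open>A single round of boosting\<close>

lemma set_proj_pmf_abs_le: "v \<in> set_pmf (proj_pmf z) \<Longrightarrow> \<bar>v\<bar> \<le> 1"
  by (auto simp: proj_pmf_def sgn_if split: if_splits)

lemma expectation_proj_pmf:
  "measure_pmf.expectation (proj_pmf z) (\<lambda>v. v) = (if \<bar>z\<bar> \<ge> 1 then sgn z else z)"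
proof (cases "\<bar>z\<bar> \<ge> 1")
  case False
  then have "0 \<le> (1 + z) / 2" "(1 + z) / 2 \<le> 1" by auto
  with False show ?thesis by (simp add: proj_pmf_def) (simp add: field_simps)
qed (simp add: proj_pmf_def)

lemma clipped_margin_ge:
  fixes y z :: real
  assumes "y \<in> {-1, 1}"
  shows "1 - \<bar>1 - z * y\<bar> \<le> (if \<bar>z\<bar> \<ge> 1 then sgn z else z) * y"
  using assms by (cases "\<bar>z\<bar> \<ge> 1"; cases "z \<ge> 0") (auto simp: sgn_if abs_if)

lemma set_relabel_pmf: "b \<in> set_pmf (relabel_pmf p y) \<Longrightarrow> b = y \<or> b = - y"
  by (auto simp: relabel_pmf_def)

lemma expectation_relabel_pmf_affine:
  assumes "p \<in> {-1..1}"
  shows "measure_pmf.expectation (relabel_pmf p y) (\<lambda>b. a + c * b) = a + c * p * y"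
proof -
  have "0 \<le> (1 + p) / 2" "(1 + p) / 2 \<le> 1" using assms by auto
  then show ?thesis by (simp add: relabel_pmf_def) (simp add: field_simps)
qed

lemma abs_margin_loss_le:
  fixes w y \<gamma> :: real
  assumes "w \<in> {-1, 1}" "y \<in> {-1, 1}" "\<gamma> > 0"
  shows "\<bar>w * y / \<gamma> - 1\<bar> \<le> 1 + 1 / \<gamma>"
proof -
  have "\<bar>w * y / \<gamma>\<bar> = 1 / \<gamma>"
    using assms by (auto simp: abs_mult)
  then show ?thesis by linarith
qed

lemma abs_mult_le_of_abs_le_one:
  fixes a b c :: real
  shows "\<bar>a\<bar> \<le> 1 \<Longrightarrow> \<bar>b\<bar> \<le> c \<Longrightarrow> \<bar>a * b\<bar> \<le> c"
  by (metis abs_ge_zero abs_mult dual_order.trans mult_left_le_one_le mult_right_mono)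

lemma oco_linear_losses_regret:
  assumes oco: "oco A N R B" and c: "\<And>j. j < N \<Longrightarrow> \<bar>c j\<bar> \<le> B"
  shows "(\<Sum>j<N. A (map (\<lambda>k p. p * c k) [0..<j]) * c j) + \<bar>\<Sum>j<N. c j\<bar> \<le> R"
proof -
  define ls where "ls = map (\<lambda>k p. p * c k) [0..<N]"
  have nth_ls: "ls ! j = (\<lambda>p. p * c j)" and take_ls: "take j ls = map (\<lambda>k p. p * c k) [0..<j]"
    if "j < N" for j
    using that by (simp_all add: ls_def take_map)
  have length_ls: "length ls = N"
    by (simp add: ls_def)
  have total_loss: "(\<Sum>j<N. (ls ! j) p) = p * (\<Sum>j<N. c j)" for p
    by (simp add: nth_ls sum_distrib_left)
  have "\<forall>l\<in>set ls. convex_on {-1..1} l \<and> (\<forall>p\<in>{-1..1}. \<bar>l p\<bar> \<le> B)"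
  proof (clarsimp simp: ls_def)
    fix k assume "k < N"
    have "convex_on {-1..1} (\<lambda>p. p * c k)"
      by (intro convex_on_linorderI) (auto simp: algebra_simps)
    moreover have "\<bar>p * c k\<bar> \<le> B" if "p \<in> {-1..1}" for p
      using that c[OF \<open>k < N\<close>] by (intro abs_mult_le_of_abs_le_one) auto
    ultimately show "convex_on {-1..1} (\<lambda>p. p * c k) \<and> (\<forall>p\<in>{-1..1}. \<bar>p * c k\<bar> \<le> B)"
      by blast
  qed
  then have "(\<Sum>j<N. (ls ! j) (A (take j ls))) - (INF p\<in>{-1..1}. \<Sum>j<N. (ls ! j) p) \<le> R"
    using oco length_ls unfolding oco_def by blast
  moreover have "(\<Sum>j<N. (ls ! j) (A (take j ls))) = (\<Sum>j<N. A (map (\<lambda>k p. p * c k) [0..<j]) * c j)"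
    by (intro sum.cong) (auto simp: nth_ls take_ls)
  ultimately have regret:
    "(\<Sum>j<N. A (map (\<lambda>k p. p * c k) [0..<j]) * c j) - (INF p\<in>{-1..1}. \<Sum>j<N. (ls ! j) p) \<le> R"
    by simp
  \<comment> \<open>the losses are linear, so the endpoint \<open>-sgn C\<close> is a best fixed point\<close>
  define C where "C = (\<Sum>j<N. c j)"
  have "(INF p\<in>{-1..1}. \<Sum>j<N. (ls ! j) p) \<le> (\<Sum>j<N. (ls ! j) (if C \<ge> 0 then -1 else 1))"
  proof (rule cINF_lower)
    show "bdd_below ((\<lambda>p. \<Sum>j<N. (ls ! j) p) ` {-1..1})"
    proof (rule bdd_belowI2[where m="- \<bar>C\<bar>"])
      fix p :: real assume "p \<in> {-1..1}"
      then have "\<bar>p * C\<bar> \<le> \<bar>C\<bar>"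
        by (intro abs_mult_le_of_abs_le_one) auto
      then show "- \<bar>C\<bar> \<le> (\<Sum>j<N. (ls ! j) p)"
        unfolding total_loss C_def[symmetric] by linarith
    qed
  qed auto
  also have "\<dots> = - \<bar>C\<bar>"
    by (simp add: total_loss C_def[symmetric])
  finally show ?thesis
    using regret by (simp add: C_def)
qed

lemma boost_point_Suc:
  "A [] = 0 \<Longrightarrow> boost_point A \<gamma> w y (Suc j) = A (map (\<lambda>k. boost_loss \<gamma> (w (Suc k)) y) [0..<j])"
  by (cases j) (simp_all add: boost_point_def map_Suc_upt[symmetric] o_def del: upt_Suc)

lemma boost_point_range: "(\<And>ls. A ls \<in> {-1..1}) \<Longrightarrow> boost_point A \<gamma> w y j \<in> {-1..1}"
  by (auto simp: boost_point_def)

lemma boost_point_cong: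
  assumes "\<And>k. k \<in> {1..<j} \<Longrightarrow> w k = w' k"
  shows "boost_point A \<gamma> w y j = boost_point A \<gamma> w' y j"
proof -
  have "map (\<lambda>k. boost_loss \<gamma> (w k) y) [1..<j] = map (\<lambda>k. boost_loss \<gamma> (w' k) y) [1..<j]"
    using assms by (intro map_cong) auto
  then show ?thesis unfolding boost_point_def by (simp only:)
qed

lemma abs_boost_loss_le:
  assumes "w \<in> {-1, 1}" "y \<in> {-1, 1}" "\<gamma> > 0" "p \<in> {-1..1}"
  shows "\<bar>boost_loss \<gamma> w y p\<bar> \<le> 1 + 1 / \<gamma>"
  unfolding boost_loss_def using assms abs_margin_loss_le[OF assms(1-3)]
  by (intro abs_mult_le_of_abs_le_one) auto

lemma proj_vote_margin_ge:
  assumes oco: "oco A N R B" and B: "B \<ge> 1 + 1 / \<gamma>" and A_Nil: "A [] = 0"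
    and N: "N > 0" and \<gamma>: "\<gamma> > 0"
    and w: "\<And>j. j \<in> {1..N} \<Longrightarrow> w j \<in> {-1, 1}" and y: "y \<in> {-1, 1}"
  shows "measure_pmf.expectation (proj_pmf ((1 / (\<gamma> * real N)) * (\<Sum>j=1..N. w j))) (\<lambda>v. v) * y
     \<ge> 1 - R / N + (1 / N) * (\<Sum>j=1..N. boost_loss \<gamma> (w j) y (boost_point A \<gamma> w y j))"
proof -
  define z where "z = (1 / (\<gamma> * real N)) * (\<Sum>j=1..N. w j)"
  define c where "c j = w j * y / \<gamma> - 1" for j
  define S where "S = (\<Sum>j=1..N. boost_loss \<gamma> (w j) y (boost_point A \<gamma> w y j))"
  have "\<bar>c (Suc j)\<bar> \<le> B" if "j < N" for j
    using abs_margin_loss_le[OF w y \<gamma>, of "Suc j"] that B by (simp add: c_def)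
  from oco_linear_losses_regret[OF oco this]
  have "S + \<bar>\<Sum>j=1..N. c j\<bar> \<le> R"
    by (simp add: S_def sum.atLeast1_atMost_eq boost_point_Suc[where A=A, OF A_Nil] boost_loss_def c_def
        mult.commute)
  moreover have "(\<Sum>j=1..N. c j) = N * (z * y - 1)"
    using N \<gamma> by (simp add: c_def z_def sum_subtractf sum_divide_distrib[symmetric]
        sum_distrib_right[symmetric] field_simps sum_distrib_left)
  ultimately have "S + N * \<bar>1 - z * y\<bar> \<le> R"
    by (simp add: abs_mult abs_minus_commute)
  then have "\<bar>1 - z * y\<bar> \<le> (R - S) / N"
    using N by (simp add: field_simps)
  then have "1 - R / N + (1 / N) * S \<le> 1 - \<bar>1 - z * y\<bar>"
    by (simp add: diff_divide_distrib)
  also have "\<dots> \<le> measure_pmf.expectation (proj_pmf z) (\<lambda>v. v) * y"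
    unfolding expectation_proj_pmf by (rule clipped_margin_ge[OF y])
  finally show ?thesis
    unfolding z_def S_def .
qed

section \<open>The boosting run\<close>

locale online_boosting =
  fixes W :: "nat \<Rightarrow> ('s, 'x) learner" and A :: "(real \<Rightarrow> real) list \<Rightarrow> real"
    and \<gamma> :: real and N T :: nat and xs :: "nat \<Rightarrow> 'x" and ys :: "nat \<Rightarrow> real"
  assumes predictions_pm1: "\<And>i s x. i \<in> {1..N} \<Longrightarrow> lr_pred (W i) s x \<in> {-1, 1}"
    and oco_range: "\<And>ls. A ls \<in> {-1..1}"
    and labels_pm1: "\<And>t. t \<in> {1..T} \<Longrightarrow> ys t \<in> {-1, 1}"
    and gamma_pos: "\<gamma> > 0"
begin

definition point :: "(nat \<Rightarrow> 's) \<Rightarrow> nat \<Rightarrow> nat \<Rightarrow> real" where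
  "point S t i = boost_point A \<gamma> (\<lambda>j. lr_pred (W j) (S j) (xs t)) (ys t) i"

definition update :: "(nat \<Rightarrow> 's) \<Rightarrow> nat \<Rightarrow> nat \<Rightarrow> 's pmf" where
  "update S t i = relabel_pmf (point S t i) (ys t) \<bind> lr_upd (W i) (S i) (xs t)"

definition vote :: "(nat \<Rightarrow> 's) \<Rightarrow> nat \<Rightarrow> real" where
  "vote S t = (1 / (\<gamma> * real N)) * (\<Sum>i=1..N. lr_pred (W i) (S i) (xs t))"

definition suffered_loss :: "(nat \<Rightarrow> 's) \<Rightarrow> nat \<Rightarrow> nat \<Rightarrow> real" where
  "suffered_loss S t i = boost_loss \<gamma> (lr_pred (W i) (S i) (xs t)) (ys t) (point S t i)"

definition states :: "nat \<Rightarrow> (nat \<Rightarrow> 's) pmf" where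
  "states n = map_pmf fst (boost_run W A \<gamma> N xs ys n)"

lemma point_range: "point S t i \<in> {-1..1}"
  unfolding point_def by (rule boost_point_range[OF oco_range])

lemma abs_prediction_le: "i \<in> {1..N} \<Longrightarrow> \<bar>lr_pred (W i) s x\<bar> \<le> 1"
  using predictions_pm1[of i s x] by auto

lemma abs_prediction_margin_le:
  "i \<in> {1..N} \<Longrightarrow> t \<in> {1..T} \<Longrightarrow> \<bar>lr_pred (W i) s (xs t) * ys t / \<gamma> - 1\<bar> \<le> 1 + 1 / \<gamma>"
  by (intro abs_margin_loss_le predictions_pm1 labels_pm1 gamma_pos)

lemma abs_point_le: "\<bar>point S t i\<bar> \<le> 1"
  using point_range[of S t i] by (simp add: abs_le_iff)

lemma abs_suffered_loss_le:
  "i \<in> {1..N} \<Longrightarrow> t \<in> {1..T} \<Longrightarrow> \<bar>suffered_loss S t i\<bar> \<le> 1 + 1 / \<gamma>"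
  unfolding suffered_loss_def
  by (intro abs_boost_loss_le predictions_pm1 labels_pm1 gamma_pos point_range)

lemma boost_round_eq:
  "boost_round W A \<gamma> N (xs t) (ys t) S = pair_pmf (Pi_pmf {1..N} undefined (update S t)) (proj_pmf (vote S t))"
  unfolding boost_round_def Let_def update_def[abs_def] point_def vote_def by simp

lemma states_Suc: "states (Suc n) = states n \<bind> (\<lambda>S. Pi_pmf {1..N} undefined (update S (Suc n)))"
  by (simp add: states_def map_bind_pmf bind_map_pmf pmf.map_comp o_def case_prod_unfold
      boost_round_eq map_fst_pair_pmf)

lemma abs_payoff_le: "x \<in> set_pmf (boost_run W A \<gamma> N xs ys n) \<Longrightarrow> \<bar>snd x\<bar> \<le> (\<Sum>t=1..n. \<bar>ys t\<bar>)"
proof (induction n arbitrary: x)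
  case (Suc n)
  then obtain S acc S' v where run: "(S, acc) \<in> set_pmf (boost_run W A \<gamma> N xs ys n)"
    and v: "v \<in> set_pmf (proj_pmf (vote S (Suc n)))" and x: "x = (S', acc + v * ys (Suc n))"
    by (auto simp: boost_round_eq)
  have "\<bar>v * ys (Suc n)\<bar> \<le> \<bar>ys (Suc n)\<bar>"
    using set_proj_pmf_abs_le[OF v] by (simp add: abs_mult mult_left_le_one_le)
  with Suc.IH[OF run] show ?case by (simp add: x)
qed auto

lemma expectation_payoff_Suc:
  "measure_pmf.expectation (boost_run W A \<gamma> N xs ys (Suc n)) snd =
   measure_pmf.expectation (boost_run W A \<gamma> N xs ys n) snd +
   measure_pmf.expectation (states n)
     (\<lambda>S. measure_pmf.expectation (proj_pmf (vote S (Suc n))) (\<lambda>v. v) * ys (Suc n))"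
proof -
  let ?run = "boost_run W A \<gamma> N xs ys"
  define m where "m S = measure_pmf.expectation (proj_pmf (vote S (Suc n))) (\<lambda>v. v) * ys (Suc n)" for S
  have "measure_pmf.expectation (?run (Suc n)) snd =
        measure_pmf.expectation (?run n) (\<lambda>x. measure_pmf.expectation
          (pair_pmf (Pi_pmf {1..N} undefined (update (fst x) (Suc n))) (proj_pmf (vote (fst x) (Suc n))))
          (\<lambda>y. snd x + snd y * ys (Suc n)))"
    unfolding boost_run.simps
    by (subst expectation_bind_pmf[where B="\<Sum>t=1..Suc n. \<bar>ys t\<bar>"])
      (use abs_payoff_le[of _ "Suc n"] in \<open>auto simp: boost_round_eq case_prod_unfold\<close>)
  also have "\<dots> = measure_pmf.expectation (?run n) (\<lambda>x. snd x + m (fst x))"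
  proof (intro Bochner_Integration.integral_cong refl)
    fix x :: "(nat \<Rightarrow> 's) \<times> real"
    show "measure_pmf.expectation (pair_pmf (Pi_pmf {1..N} undefined (update (fst x) (Suc n)))
        (proj_pmf (vote (fst x) (Suc n)))) (\<lambda>y. snd x + snd y * ys (Suc n)) = snd x + m (fst x)"
      unfolding expectation_pair_pmf_snd[where f="\<lambda>v. snd x + v * ys (Suc n)"] m_def
      by (rule expectation_affine_pmf[OF set_proj_pmf_abs_le])
  qed
  also have "\<dots> = measure_pmf.expectation (?run n) snd + measure_pmf.expectation (states n) m"
  proof -
    have "\<bar>m S\<bar> \<le> \<bar>ys (Suc n)\<bar>" for S
      unfolding m_def abs_mult
      by (intro mult_left_le_one_le abs_expectation_pmf_le set_proj_pmf_abs_le) auto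
    then have "integrable (measure_pmf (?run n)) (\<lambda>x. m (fst x))"
      by (intro integrable_measure_pmf_bounded)
    moreover have "integrable (measure_pmf (?run n)) snd"
      using abs_payoff_le by (rule integrable_measure_pmf_bounded)
    ultimately show ?thesis by (simp add: states_def)
  qed
  finally show ?thesis unfolding m_def .
qed

lemma expectation_payoff:
  "measure_pmf.expectation (boost_run W A \<gamma> N xs ys n) snd =
   (\<Sum>t<n. measure_pmf.expectation (states t)
      (\<lambda>S. measure_pmf.expectation (proj_pmf (vote S (Suc t))) (\<lambda>v. v) * ys (Suc t)))"
proof (induction n)
  case (Suc n)
  then show ?case by (simp del: boost_run.simps add: expectation_payoff_Suc)
qed simp

lemma expected_margin_ge:
  assumes oco: "oco A N R B" and B: "B \<ge> 1 + 1 / \<gamma>" and A_Nil: "A [] = 0" and N: "N > 0"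
    and t: "t \<in> {1..T}"
  shows "measure_pmf.expectation (states n) (\<lambda>S. measure_pmf.expectation (proj_pmf (vote S t)) (\<lambda>v. v) * ys t)
     \<ge> 1 - R / N + (1 / N) * (\<Sum>i=1..N. measure_pmf.expectation (states n) (\<lambda>S. suffered_loss S t i))"
proof -
  let ?M = "measure_pmf (states n)"
  have loss_integrable: "integrable ?M (\<lambda>S. suffered_loss S t i)" if "i \<in> {1..N}" for i
    using abs_suffered_loss_le[OF that t] by (rule integrable_measure_pmf_bounded)
  then have sum_integrable: "integrable ?M (\<lambda>S. \<Sum>i=1..N. suffered_loss S t i)"
    by auto
  have "1 - R / N + (1 / N) * (\<Sum>i=1..N. measure_pmf.expectation (states n) (\<lambda>S. suffered_loss S t i))
      = measure_pmf.expectation (states n) (\<lambda>S. 1 - R / N + (1 / N) * (\<Sum>i=1..N. suffered_loss S t i))"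
    using loss_integrable sum_integrable by (simp add: Bochner_Integration.integral_sum)
  also have "\<dots> \<le>
      measure_pmf.expectation (states n) (\<lambda>S. measure_pmf.expectation (proj_pmf (vote S t)) (\<lambda>v. v) * ys t)"
  proof (rule integral_mono)
    show "integrable ?M (\<lambda>S. 1 - R / N + (1 / N) * (\<Sum>i=1..N. suffered_loss S t i))"
      using sum_integrable by simp
    have "\<bar>measure_pmf.expectation (proj_pmf (vote S t)) (\<lambda>v. v) * ys t\<bar> \<le> 1" for S
      using labels_pm1[OF t] set_proj_pmf_abs_le
      by (intro abs_mult_le_of_abs_le_one abs_expectation_pmf_le) auto
    then show "integrable ?M (\<lambda>S. measure_pmf.expectation (proj_pmf (vote S t)) (\<lambda>v. v) * ys t)"
      by (intro integrable_measure_pmf_bounded)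
    show "1 - R / N + (1 / N) * (\<Sum>i=1..N. suffered_loss S t i)
        \<le> measure_pmf.expectation (proj_pmf (vote S t)) (\<lambda>v. v) * ys t" for S
      unfolding vote_def suffered_loss_def point_def
      by (rule proj_vote_margin_ge[OF oco B A_Nil N gamma_pos predictions_pm1 labels_pm1[OF t]])
  qed
  finally show ?thesis .
qed

section \<open>The run as seen by a single weak learner\<close>

lemma point_cong:
  assumes "\<And>j. j \<in> {1..<i} \<Longrightarrow> S j = S' j"
  shows "point S t i = point S' t i"
  unfolding point_def using assms by (intro boost_point_cong) auto

context
  fixes i :: nat
  assumes learner: "i \<in> {1..N}"
begin

definition prefix_update :: "(nat \<Rightarrow> 's) \<Rightarrow> nat \<Rightarrow> (nat \<Rightarrow> 's) pmf" where
  "prefix_update S t = Pi_pmf {1..<i} undefined (update S t)"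

definition learner_update :: "(nat \<Rightarrow> 's) \<Rightarrow> 's \<Rightarrow> nat \<Rightarrow> 's pmf" where
  "learner_update S s t = relabel_pmf (point S t i) (ys t) \<bind> lr_upd (W i) s (xs t)"

text \<open>Joint law of the states of the learners before \<open>i\<close> and of the points \<open>p\<^sup>i\<^sub>t\<close> they
  dictate to learner \<open>i\<close>; it does not involve the randomness of learner \<open>i\<close>.\<close>
primrec prefix_run :: "nat \<Rightarrow> ((nat \<Rightarrow> 's) \<times> (nat \<Rightarrow> real)) pmf" where
  "prefix_run 0 = map_pmf (\<lambda>S. (S, \<lambda>_. 0)) (Pi_pmf {1..<i} undefined (\<lambda>j. lr_init (W j)))"
| "prefix_run (Suc n) = prefix_run n \<bind> (\<lambda>(S, \<pi>).
     map_pmf (\<lambda>S'. (S', \<pi>(Suc n := point S (Suc n) i))) (prefix_update S (Suc n)))"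

text \<open>Beyond round \<open>T\<close> the labels \<open>ys t\<close> need not be \<open>\<plusminus>1\<close>, so a dummy label keeps the adversary valid.\<close>
definition label_adversary :: "(nat \<Rightarrow> real) \<Rightarrow> 'x adversary" where
  "label_adversary \<pi> h = (if length h < T
     then map_pmf (\<lambda>b. (xs (Suc (length h)), b)) (relabel_pmf (\<pi> (Suc (length h))) (ys (Suc (length h))))
     else return_pmf (xs (Suc (length h)), 1))"

definition learner_states :: "(nat \<Rightarrow> real) \<Rightarrow> nat \<Rightarrow> 's pmf" where
  "learner_states \<pi> n = map_pmf fst (interact (W i) (label_adversary \<pi>) n)"

lemma learner_states_0: "learner_states \<pi> 0 = lr_init (W i)"
  by (simp add: learner_states_def pmf.map_comp o_def)

lemma learner_states_Suc:
  assumes "n < T"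
  shows "learner_states \<pi> (Suc n) =
    learner_states \<pi> n \<bind> (\<lambda>s. relabel_pmf (\<pi> (Suc n)) (ys (Suc n)) \<bind> lr_upd (W i) s (xs (Suc n)))"
proof -
  have "learner_states \<pi> (Suc n) = interact (W i) (label_adversary \<pi>) n \<bind>
      (\<lambda>z. relabel_pmf (\<pi> (Suc n)) (ys (Suc n)) \<bind> lr_upd (W i) (fst z) (xs (Suc n)))"
    unfolding learner_states_def interact.simps map_bind_pmf
  proof (intro bind_pmf_cong refl)
    fix z assume z: "z \<in> set_pmf (interact (W i) (label_adversary \<pi>) n)"
    obtain s h where sh: "z = (s, h)" by (cases z)
    have "length h = n" using length_interact[OF z] sh by simp
    then show "map_pmf fst ((\<lambda>(s, h). label_adversary \<pi> h \<bind> (\<lambda>(x, y).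
        map_pmf (\<lambda>s'. (s', h @ [(x, y, lr_pred (W i) s x)])) (lr_upd (W i) s x y))) z)
       = relabel_pmf (\<pi> (Suc n)) (ys (Suc n)) \<bind> lr_upd (W i) (fst z) (xs (Suc n))"
      using assms by (simp add: sh label_adversary_def map_bind_pmf bind_map_pmf pmf.map_comp o_def)
  qed
  then show ?thesis by (simp add: learner_states_def bind_map_pmf)
qed

lemma interact_label_adversary_cong:
  assumes "\<And>t. t \<in> {1..n} \<Longrightarrow> \<pi> t = \<pi>' t"
  shows "interact (W i) (label_adversary \<pi>) n = interact (W i) (label_adversary \<pi>') n"
  using assms
proof (induction n)
  case (Suc n)
  then have IH: "interact (W i) (label_adversary \<pi>) n = interact (W i) (label_adversary \<pi>') n"
    by simp
  show ?case
    unfolding interact.simps IH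
  proof (intro bind_pmf_cong refl)
    fix z assume z: "z \<in> set_pmf (interact (W i) (label_adversary \<pi>') n)"
    obtain s h where sh: "z = (s, h)" by (cases z)
    have "length h = n" using length_interact[OF z] sh by simp
    then have "label_adversary \<pi> h = label_adversary \<pi>' h"
      using Suc.prems[of "Suc n"] by (simp add: label_adversary_def)
    then show "(\<lambda>(s, h). label_adversary \<pi> h \<bind> (\<lambda>(x, y).
          map_pmf (\<lambda>s'. (s', h @ [(x, y, lr_pred (W i) s x)])) (lr_upd (W i) s x y))) z =
        (\<lambda>(s, h). label_adversary \<pi>' h \<bind> (\<lambda>(x, y).
          map_pmf (\<lambda>s'. (s', h @ [(x, y, lr_pred (W i) s x)])) (lr_upd (W i) s x y))) z"
      by (simp add: sh)
  qed
qed simp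

lemma learner_states_cong:
  assumes "\<And>t. t \<in> {1..n} \<Longrightarrow> \<pi> t = \<pi>' t"
  shows "learner_states \<pi> n = learner_states \<pi>' n"
  using interact_label_adversary_cong[OF assms] by (simp add: learner_states_def)

lemma prefix_run_points_range: "x \<in> set_pmf (prefix_run n) \<Longrightarrow> snd x t \<in> {-1..1}"
proof (induction n arbitrary: x)
  case (Suc n)
  then obtain S \<pi> S' where "(S, \<pi>) \<in> set_pmf (prefix_run n)"
    and "x = (S', \<pi>(Suc n := point S (Suc n) i))"
    by auto
  with Suc.IH point_range show ?case by auto
qed auto

lemma prefix_run_upto:
  assumes "k \<le> m"
  shows "map_pmf (\<lambda>x j. if j \<le> k then snd x j else 0) (prefix_run m) =
         map_pmf (\<lambda>x j. if j \<le> k then snd x j else 0) (prefix_run k)"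
  using assms
proof (induction m rule: dec_induct)
  case (step m)
  let ?cut = "\<lambda>x j. if j \<le> k then snd x j else (0::real)"
  have "map_pmf ?cut (prefix_run (Suc m)) = prefix_run m \<bind> (\<lambda>x. return_pmf (?cut x))"
    unfolding prefix_run.simps map_bind_pmf
  proof (intro bind_pmf_cong refl)
    fix x :: "(nat \<Rightarrow> 's) \<times> (nat \<Rightarrow> real)"
    obtain S \<pi> where x: "x = (S, \<pi>)" by (cases x)
    have "(\<lambda>j. if j \<le> k then (\<pi>(Suc m := v)) j else 0) = (\<lambda>j. if j \<le> k then \<pi> j else 0)" for v
      using step.hyps by (auto simp: fun_eq_iff)
    then show "map_pmf ?cut ((\<lambda>(S, \<pi>). map_pmf (\<lambda>S'. (S', \<pi>(Suc m := point S (Suc m) i)))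
        (prefix_update S (Suc m))) x) = return_pmf (?cut x)"
      by (simp only: x prod.case pmf.map_comp o_def snd_conv map_pmf_const)
  qed
  also have "\<dots> = map_pmf ?cut (prefix_run m)"
    by (simp only: map_pmf_def)
  also note step.IH
  finally show ?case .
qed simp

lemma expectation_prefix_run_upto:
  fixes G :: "(nat \<Rightarrow> real) \<Rightarrow> real"
  assumes "k \<le> m" and G: "\<And>\<pi> \<pi>'. (\<And>j. j \<le> k \<Longrightarrow> \<pi> j = \<pi>' j) \<Longrightarrow> G \<pi> = G \<pi>'"
  shows "measure_pmf.expectation (prefix_run m) (\<lambda>x. G (snd x)) =
         measure_pmf.expectation (prefix_run k) (\<lambda>x. G (snd x))"
proof -
  let ?cut = "\<lambda>x j. if j \<le> k then snd x j else (0::real)"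
  have cut: "measure_pmf.expectation (prefix_run n) (\<lambda>x. G (snd x)) =
      measure_pmf.expectation (map_pmf ?cut (prefix_run n)) G" for n
    unfolding integral_map_pmf by (intro Bochner_Integration.integral_cong refl G) simp
  show ?thesis
    unfolding cut prefix_run_upto[OF assms(1)] ..
qed

lemma point_restrict: "j \<le> i \<Longrightarrow> point S t j = point (restrict S {1..<i}) t j"
  by (intro point_cong) auto

lemma update_restrict:
  "j \<in> {1..<i} \<Longrightarrow> update S t j = update (restrict S {1..<i}) t j"
  unfolding update_def by (simp add: point_restrict[of j S t])

lemma update_learner: "update S t i = learner_update (restrict S {1..<i}) (S i) t"
  unfolding update_def learner_update_def by (simp add: point_restrict[of i S t])

lemma update_split:
  "map_pmf (\<lambda>S. (restrict S {1..<i}, S i)) (Pi_pmf {1..N} undefined (update S t)) =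
   pair_pmf (prefix_update (restrict S {1..<i}) t) (learner_update (restrict S {1..<i}) (S i) t)"
proof -
  have "map_pmf (\<lambda>S. (restrict S {1..<i}, S i)) (Pi_pmf {1..N} undefined (update S t)) =
      pair_pmf (Pi_pmf {1..<i} undefined (update S t)) (update S t i)"
    using learner by (intro Pi_pmf_restrict_component) auto
  also have "Pi_pmf {1..<i} undefined (update S t) = prefix_update (restrict S {1..<i}) t"
    unfolding prefix_update_def by (intro Pi_pmf_cong refl) (simp add: update_restrict[of _ S])
  finally show ?thesis
    by (simp only: update_learner)
qed

lemma learner_states_Suc_fun_upd:
  assumes "n < T"
  shows "learner_states (\<pi>(Suc n := point S (Suc n) i)) (Suc n) =
    learner_states \<pi> n \<bind> (\<lambda>s. learner_update S s (Suc n))"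
proof -
  have "learner_states (\<pi>(Suc n := point S (Suc n) i)) n = learner_states \<pi> n"
    by (intro learner_states_cong) auto
  then show ?thesis
    using learner_states_Suc[OF assms, of "\<pi>(Suc n := point S (Suc n) i)"]
    by (simp add: learner_update_def fun_upd_same del: fun_upd_apply)
qed

lemma states_split:
  assumes "n \<le> T"
  shows "map_pmf (\<lambda>S. (restrict S {1..<i}, S i)) (states n) =
         prefix_run n \<bind> (\<lambda>(S, \<pi>). map_pmf (\<lambda>s. (S, s)) (learner_states \<pi> n))"
  using assms
proof (induction n)
  case 0
  have "map_pmf (\<lambda>S. (restrict S {1..<i}, S i)) (states 0) =
      pair_pmf (Pi_pmf {1..<i} undefined (\<lambda>j. lr_init (W j))) (lr_init (W i))"
    unfolding states_def boost_run.simps pmf.map_comp o_def fst_conv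
    using learner by (intro Pi_pmf_restrict_component) auto
  also have "\<dots> = prefix_run 0 \<bind> (\<lambda>(S, \<pi>). map_pmf (\<lambda>s. (S, s)) (learner_states \<pi> 0))"
    unfolding prefix_run.simps bind_map_pmf learner_states_0 by (simp add: pair_pmf_def map_pmf_def)
  finally show ?case .
next
  case (Suc n)
  let ?t = "Suc n"
  have "map_pmf (\<lambda>S. (restrict S {1..<i}, S i)) (states ?t) =
      map_pmf (\<lambda>S. (restrict S {1..<i}, S i)) (states n) \<bind>
        (\<lambda>(S, s). pair_pmf (prefix_update S ?t) (learner_update S s ?t))"
    by (simp only: states_Suc map_bind_pmf update_split bind_map_pmf o_def prod.case)
  also have "\<dots> = prefix_run n \<bind> (\<lambda>(S, \<pi>). learner_states \<pi> n \<bind> (\<lambda>s.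
      prefix_update S ?t \<bind> (\<lambda>S'. map_pmf (\<lambda>s'. (S', s')) (learner_update S s ?t))))"
    unfolding Suc.IH[OF Suc_leD[OF Suc.prems]]
    by (simp add: bind_assoc_pmf bind_map_pmf case_prod_unfold pair_pmf_def map_pmf_def bind_return_pmf)
  \<comment> \<open>the learners before \<open>i\<close> and learner \<open>i\<close> are updated with independent randomness\<close>
  also have "\<dots> = prefix_run n \<bind> (\<lambda>(S, \<pi>). prefix_update S ?t \<bind> (\<lambda>S'.
      learner_states \<pi> n \<bind> (\<lambda>s. map_pmf (\<lambda>s'. (S', s')) (learner_update S s ?t))))"
    by (subst bind_commute_pmf) (rule refl)
  also have "\<dots> = prefix_run ?t \<bind> (\<lambda>(S, \<pi>). map_pmf (\<lambda>s. (S, s)) (learner_states \<pi> ?t))"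
    using Suc.prems
    by (simp add: case_prod_unfold bind_assoc_pmf bind_map_pmf map_bind_pmf learner_states_Suc_fun_upd)
  finally show ?case .
qed

lemma expectation_point_mult:
  fixes g :: "'s \<Rightarrow> real"
  assumes "n < T" and g: "\<And>s. \<bar>g s\<bar> \<le> B"
  shows "measure_pmf.expectation (states n) (\<lambda>S. point S (Suc n) i * g (S i)) =
    measure_pmf.expectation (prefix_run T)
      (\<lambda>x. snd x (Suc n) * measure_pmf.expectation (learner_states (snd x) n) g)"
proof -
  define G where "G \<pi> = \<pi> (Suc n) * measure_pmf.expectation (learner_states \<pi> n) g" for \<pi>
  have G_bound: "\<bar>G \<pi>\<bar> \<le> B" if "\<pi> (Suc n) \<in> {-1..1}" for \<pi>
    unfolding G_def using that g by (intro abs_mult_le_of_abs_le_one abs_expectation_pmf_le) auto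
  have G_upd: "G (\<pi>(Suc n := v)) = v * measure_pmf.expectation (learner_states \<pi> n) g" for \<pi> v
    unfolding G_def by (subst learner_states_cong[of n _ \<pi>]) auto
  have "measure_pmf.expectation (states n) (\<lambda>S. point S (Suc n) i * g (S i)) =
      measure_pmf.expectation (map_pmf (\<lambda>S. (restrict S {1..<i}, S i)) (states n))
        (\<lambda>(S, s). point S (Suc n) i * g s)"
    by (simp only: integral_map_pmf prod.case point_restrict[OF order_refl, symmetric])
  also have "\<dots> = measure_pmf.expectation (prefix_run n \<bind> (\<lambda>(S, \<pi>). map_pmf (\<lambda>s. (S, s)) (learner_states \<pi> n)))
      (\<lambda>(S, s). point S (Suc n) i * g s)"
    by (simp only: states_split[OF less_imp_le[OF \<open>n < T\<close>]])
  also have "\<dots> = measure_pmf.expectation (prefix_run n)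
      (\<lambda>x. point (fst x) (Suc n) i * measure_pmf.expectation (learner_states (snd x) n) g)"
    using abs_point_le g
    by (subst expectation_bind_pmf[where B=B]) (auto simp: case_prod_unfold intro!: abs_mult_le_of_abs_le_one)
  \<comment> \<open>the point of round \<open>n + 1\<close> is the one that \<open>prefix_run\<close> records in its next step\<close>
  also have "\<dots> = measure_pmf.expectation (prefix_run (Suc n)) (\<lambda>x. G (snd x))"
    unfolding prefix_run.simps
    by (subst expectation_bind_pmf[where B=B])
      (use G_bound prefix_run_points_range[of _ "Suc n"] in \<open>auto simp: case_prod_unfold G_upd\<close>)
  also have "\<dots> = measure_pmf.expectation (prefix_run T) (\<lambda>x. G (snd x))"
  proof (rule expectation_prefix_run_upto[symmetric])
    show "Suc n \<le> T"
      using \<open>n < T\<close> by simp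
    fix \<pi> \<pi>' :: "nat \<Rightarrow> real"
    assume agree: "\<And>j. j \<le> Suc n \<Longrightarrow> \<pi> j = \<pi>' j"
    then have "learner_states \<pi> n = learner_states \<pi>' n"
      by (intro learner_states_cong) simp
    with agree[of "Suc n"] show "G \<pi> = G \<pi>'"
      by (simp add: G_def)
  qed
  finally show ?thesis
    unfolding G_def .
qed

lemma label_adversary_valid: "valid_adversary (label_adversary \<pi>)"
  unfolding valid_adversary_def
proof (intro allI subsetI)
  fix h y assume y: "y \<in> snd ` set_pmf (label_adversary \<pi> h)"
  show "y \<in> {-1, 1}"
  proof (cases "length h < T")
    case True
    then have "ys (Suc (length h)) \<in> {-1, 1}"
      by (intro labels_pm1) auto
    with True y show ?thesis
      by (auto simp: label_adversary_def dest!: set_relabel_pmf)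
  qed (use y in \<open>auto simp: label_adversary_def\<close>)
qed

lemma abs_interact_payoff_le:
  fixes f :: "'x \<Rightarrow> real \<Rightarrow> real"
  assumes f: "\<And>x w. w \<in> {-1, 1} \<Longrightarrow> \<bar>f x w\<bar> \<le> 1"
    and z: "z \<in> set_pmf (interact (W i) (label_adversary \<pi>) n)"
  shows "\<bar>(\<lambda>(s, h). \<Sum>(x, y, w)\<leftarrow>h. f x w * y) z\<bar> \<le> n"
proof -
  obtain s h where sh: "z = (s, h)" by (cases z)
  have "\<bar>f x w * y\<bar> \<le> 1" if "(x, y, w) \<in> set h" for x y w
    using interact_transcript_pm1[OF label_adversary_valid predictions_pm1[OF learner] z, of x y w]
      that f[of w x] by (auto simp: sh abs_mult)
  then have "\<bar>\<Sum>(x, y, w)\<leftarrow>h. f x w * y\<bar> \<le> length h"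
    by (intro abs_sum_list_le_length) auto
  then show ?thesis
    using length_interact[OF z] by (simp add: sh)
qed

lemma expectation_label_adversary_round:
  fixes f :: "'x \<Rightarrow> real \<Rightarrow> real"
  assumes "length h < T" and \<pi>: "\<pi> (Suc (length h)) \<in> {-1..1}"
  defines "t \<equiv> Suc (length h)"
  shows "measure_pmf.expectation (label_adversary \<pi> h \<bind> (\<lambda>(x, y).
      map_pmf (\<lambda>s'. (s', h @ [(x, y, lr_pred (W i) s x)])) (lr_upd (W i) s x y)))
      (\<lambda>(s, h). \<Sum>(x, y, w)\<leftarrow>h. f x w * y) =
    (\<Sum>(x, y, w)\<leftarrow>h. f x w * y) + f (xs t) (lr_pred (W i) s (xs t)) * (\<pi> t * ys t)"
proof -
  let ?\<Phi> = "\<lambda>(s, h). \<Sum>(x, y, w)\<leftarrow>h. f x w * y"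
  let ?K = "label_adversary \<pi> h \<bind> (\<lambda>(x, y).
    map_pmf (\<lambda>s'. (s', h @ [(x, y, lr_pred (W i) s x)])) (lr_upd (W i) s x y))"
  let ?c = "f (xs t) (lr_pred (W i) s (xs t))"
  have "?K = relabel_pmf (\<pi> t) (ys t) \<bind>
      (\<lambda>b. map_pmf (\<lambda>s'. (s', h @ [(xs t, b, lr_pred (W i) s (xs t))])) (lr_upd (W i) s (xs t) b))"
    using assms(1) by (simp add: t_def label_adversary_def bind_map_pmf)
  then have "map_pmf ?\<Phi> ?K = relabel_pmf (\<pi> t) (ys t) \<bind> (\<lambda>b. return_pmf (?\<Phi> (s, h) + ?c * b))"
    by (simp add: map_bind_pmf pmf.map_comp o_def)
  then have K: "map_pmf ?\<Phi> ?K = map_pmf (\<lambda>b. ?\<Phi> (s, h) + ?c * b) (relabel_pmf (\<pi> t) (ys t))"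
    by (simp add: map_pmf_def)
  have "measure_pmf.expectation ?K ?\<Phi> = measure_pmf.expectation (map_pmf ?\<Phi> ?K) (\<lambda>v. v)"
    by simp
  also have "\<dots> = measure_pmf.expectation (relabel_pmf (\<pi> t) (ys t)) (\<lambda>b. ?\<Phi> (s, h) + ?c * b)"
    unfolding K by simp
  also have "\<dots> = ?\<Phi> (s, h) + ?c * (\<pi> t * ys t)"
    using \<pi> by (simp add: t_def expectation_relabel_pmf_affine)
  finally show ?thesis by simp
qed

lemma expectation_interact_label_adversary:
  fixes f :: "'x \<Rightarrow> real \<Rightarrow> real"
  assumes f: "\<And>x w. w \<in> {-1, 1} \<Longrightarrow> \<bar>f x w\<bar> \<le> 1" and \<pi>: "\<And>t. \<pi> t \<in> {-1..1}"
  shows "n \<le> T \<Longrightarrow>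
    measure_pmf.expectation (interact (W i) (label_adversary \<pi>) n) (\<lambda>(s, h). \<Sum>(x, y, w)\<leftarrow>h. f x w * y) =
    (\<Sum>t<n. measure_pmf.expectation (learner_states \<pi> t) (\<lambda>s. f (xs (Suc t)) (lr_pred (W i) s (xs (Suc t))))
       * \<pi> (Suc t) * ys (Suc t))"
proof (induction n)
  case (Suc n)
  let ?I = "interact (W i) (label_adversary \<pi>)"
  let ?\<Phi> = "\<lambda>(s, h). \<Sum>(x, y, w)\<leftarrow>h. f x w * y"
  let ?g = "\<lambda>z. f (xs (Suc n)) (lr_pred (W i) (fst z) (xs (Suc n)))"
  have "measure_pmf.expectation (?I (Suc n)) ?\<Phi> = measure_pmf.expectation (?I n) (\<lambda>z.
      measure_pmf.expectation ((\<lambda>(s, h). label_adversary \<pi> h \<bind> (\<lambda>(x, y).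
        map_pmf (\<lambda>s'. (s', h @ [(x, y, lr_pred (W i) s x)])) (lr_upd (W i) s x y))) z) ?\<Phi>)"
    unfolding interact.simps
    by (rule expectation_bind_pmf) (use abs_interact_payoff_le[OF f, where \<pi>=\<pi> and n="Suc n"] in simp)
  also have "\<dots> = measure_pmf.expectation (?I n) (\<lambda>z. ?\<Phi> z + ?g z * (\<pi> (Suc n) * ys (Suc n)))"
  proof (intro integral_cong_AE AE_pmfI)
    fix z assume z: "z \<in> set_pmf (?I n)"
    obtain s h where sh: "z = (s, h)" by (cases z)
    have "length h = n"
      using length_interact[OF z] sh by simp
    then show "measure_pmf.expectation ((\<lambda>(s, h). label_adversary \<pi> h \<bind> (\<lambda>(x, y).
        map_pmf (\<lambda>s'. (s', h @ [(x, y, lr_pred (W i) s x)])) (lr_upd (W i) s x y))) z) ?\<Phi> =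
        ?\<Phi> z + ?g z * (\<pi> (Suc n) * ys (Suc n))"
      using Suc.prems \<pi> by (simp add: sh expectation_label_adversary_round)
  qed simp_all
  also have "\<dots> = measure_pmf.expectation (?I n) ?\<Phi> +
      measure_pmf.expectation (?I n) ?g * (\<pi> (Suc n) * ys (Suc n))"
  proof -
    have "integrable (measure_pmf (?I n)) ?\<Phi>"
      using abs_interact_payoff_le[OF f] by (rule integrable_measure_pmf_bounded)
    moreover have "integrable (measure_pmf (?I n)) ?g"
      using f predictions_pm1[OF learner] by (intro integrable_measure_pmf_bounded) blast
    ultimately show ?thesis by simp
  qed
  finally show ?case
    using Suc by (simp add: learner_states_def)
qed simp

lemma awol_against_points:
  assumes awol: "awol (W i) \<gamma> T RW H" and h: "h \<in> H" and H_pm1: "\<forall>h\<in>H. \<forall>x. h x \<in> {-1, 1}"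
    and \<pi>: "\<And>t. \<pi> t \<in> {-1..1}"
  shows "\<gamma> * (\<Sum>t<T. h (xs (Suc t)) * \<pi> (Suc t) * ys (Suc t)) - RW T \<le>
    (\<Sum>t<T. measure_pmf.expectation (learner_states \<pi> t) (\<lambda>s. lr_pred (W i) s (xs (Suc t)))
       * \<pi> (Suc t) * ys (Suc t))"
proof -
  let ?I = "interact (W i) (label_adversary \<pi>) T"
  let ?payoff = "\<lambda>c. measure_pmf.expectation ?I (\<lambda>(s, h). \<Sum>(x, y, w)\<leftarrow>h. c x * y)"
  have expert_payoff: "?payoff c = (\<Sum>t<T. c (xs (Suc t)) * \<pi> (Suc t) * ys (Suc t))" if "c \<in> H" for c
  proof -
    have "\<bar>c x\<bar> \<le> 1" for x
    proof -
      have "c x \<in> {-1, 1}"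
        using H_pm1 that by blast
      then show ?thesis by auto
    qed
    then have "?payoff c = (\<Sum>t<T. measure_pmf.expectation (learner_states \<pi> t) (\<lambda>s. c (xs (Suc t)))
        * \<pi> (Suc t) * ys (Suc t))"
      by (intro expectation_interact_label_adversary \<pi>) auto
    then show ?thesis by simp
  qed
  have bdd: "bdd_above (?payoff ` H)"
  proof (rule bdd_aboveI2[where M="real T"])
    fix c assume c: "c \<in> H"
    have "c (xs (Suc t)) * \<pi> (Suc t) * ys (Suc t) \<le> 1" if "t < T" for t
    proof -
      have "c (xs (Suc t)) \<in> {-1, 1}" "ys (Suc t) \<in> {-1, 1}"
        using H_pm1 c labels_pm1[of "Suc t"] that by auto
      with \<pi>[of "Suc t"] show ?thesis
        by auto
    qed
    then have "(\<Sum>t<T. c (xs (Suc t)) * \<pi> (Suc t) * ys (Suc t)) \<le> (\<Sum>t<T. 1)"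
      by (intro sum_mono) auto
    then show "?payoff c \<le> real T"
      by (simp add: expert_payoff[OF c])
  qed
  have "?payoff h \<le> (SUP c\<in>H. ?payoff c)"
    by (rule cSUP_upper[OF h bdd])
  then have "\<gamma> * (\<Sum>t<T. h (xs (Suc t)) * \<pi> (Suc t) * ys (Suc t)) \<le> \<gamma> * (SUP c\<in>H. ?payoff c)"
    unfolding expert_payoff[OF h] using gamma_pos by (intro mult_left_mono) auto
  also have "\<gamma> * (SUP c\<in>H. ?payoff c) - RW T \<le>
      measure_pmf.expectation ?I (\<lambda>(s, h). \<Sum>(x, y, w)\<leftarrow>h. w * y)"
    using awol label_adversary_valid unfolding awol_def by blast
  also have "\<dots> = (\<Sum>t<T. measure_pmf.expectation (learner_states \<pi> t) (\<lambda>s. lr_pred (W i) s (xs (Suc t)))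
       * \<pi> (Suc t) * ys (Suc t))"
    by (rule expectation_interact_label_adversary) (use \<pi> in \<open>auto simp: abs_le_iff\<close>)
  finally show ?thesis by simp
qed

definition expected_round_loss :: "(nat \<Rightarrow> real) \<Rightarrow> nat \<Rightarrow> real" where
  "expected_round_loss \<pi> t = \<pi> (Suc t) *
     measure_pmf.expectation (learner_states \<pi> t) (\<lambda>s. lr_pred (W i) s (xs (Suc t)) * ys (Suc t) / \<gamma> - 1)"

lemma abs_expected_round_loss_le:
  assumes "t < T" and "\<pi> (Suc t) \<in> {-1..1}"
  shows "\<bar>expected_round_loss \<pi> t\<bar> \<le> 1 + 1 / \<gamma>"
  unfolding expected_round_loss_def using assms
  by (intro abs_mult_le_of_abs_le_one abs_expectation_pmf_le abs_prediction_margin_le[OF learner])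
    (auto simp: abs_le_iff)

lemma losses_against_points_ge:
  assumes awol: "awol (W i) \<gamma> T RW H" and h: "h \<in> H" and H_pm1: "\<forall>h\<in>H. \<forall>x. h x \<in> {-1, 1}"
    and \<pi>: "\<And>t. \<pi> t \<in> {-1..1}"
  shows "(\<Sum>t<T. h (xs (Suc t)) * ys (Suc t) - 1) - RW T / \<gamma> \<le> (\<Sum>t<T. expected_round_loss \<pi> t)"
proof -
  define e where "e t = measure_pmf.expectation (learner_states \<pi> t) (\<lambda>s. lr_pred (W i) s (xs (Suc t)))" for t
  have expected_margin: "measure_pmf.expectation (learner_states \<pi> t)
      (\<lambda>s. lr_pred (W i) s (xs (Suc t)) * ys (Suc t) / \<gamma> - 1) = e t * ys (Suc t) / \<gamma> - 1" for t
  proof -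
    have "integrable (measure_pmf (learner_states \<pi> t)) (\<lambda>s. lr_pred (W i) s (xs (Suc t)))"
      using abs_prediction_le[OF learner] by (rule integrable_measure_pmf_bounded)
    then show ?thesis by (simp add: e_def)
  qed
  \<comment> \<open>a point \<open>p \<le> 1\<close> can only shrink the nonpositive excess loss \<open>h(x) y - 1\<close> of an expert\<close>
  have "(\<Sum>t<T. h (xs (Suc t)) * ys (Suc t) - 1) \<le> (\<Sum>t<T. \<pi> (Suc t) * (h (xs (Suc t)) * ys (Suc t) - 1))"
  proof (rule sum_mono)
    fix t assume "t \<in> {..<T}"
    have "h (xs (Suc t)) \<in> {-1, 1}"
      using H_pm1 h by blast
    moreover have "ys (Suc t) \<in> {-1, 1}"
      using \<open>t \<in> {..<T}\<close> by (intro labels_pm1) auto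
    ultimately have "(1 - \<pi> (Suc t)) * (h (xs (Suc t)) * ys (Suc t) - 1) \<le> 0"
      using \<pi>[of "Suc t"] by (intro mult_nonneg_nonpos) auto
    then show "h (xs (Suc t)) * ys (Suc t) - 1 \<le> \<pi> (Suc t) * (h (xs (Suc t)) * ys (Suc t) - 1)"
      by (simp add: algebra_simps)
  qed
  moreover have "(\<Sum>t<T. h (xs (Suc t)) * \<pi> (Suc t) * ys (Suc t)) - RW T / \<gamma> \<le>
      (\<Sum>t<T. e t * \<pi> (Suc t) * ys (Suc t)) / \<gamma>"
  proof -
    have "(\<gamma> * (\<Sum>t<T. h (xs (Suc t)) * \<pi> (Suc t) * ys (Suc t)) - RW T) / \<gamma> \<le>
        (\<Sum>t<T. e t * \<pi> (Suc t) * ys (Suc t)) / \<gamma>"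
      using awol_against_points[where \<pi>=\<pi>, OF awol h H_pm1 \<pi>] gamma_pos unfolding e_def
      by (intro divide_right_mono) auto
    then show ?thesis
      using gamma_pos by (simp add: diff_divide_distrib)
  qed
  moreover have "(\<Sum>t<T. \<pi> (Suc t) * (h (xs (Suc t)) * ys (Suc t) - 1)) =
      (\<Sum>t<T. h (xs (Suc t)) * \<pi> (Suc t) * ys (Suc t)) - (\<Sum>t<T. \<pi> (Suc t))"
    by (simp add: algebra_simps sum_subtractf)
  moreover have "(\<Sum>t<T. \<pi> (Suc t) * (e t * ys (Suc t) / \<gamma> - 1)) =
      (\<Sum>t<T. e t * \<pi> (Suc t) * ys (Suc t)) / \<gamma> - (\<Sum>t<T. \<pi> (Suc t))"
    by (simp add: algebra_simps sum_subtractf sum_divide_distrib)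
  ultimately show ?thesis
    unfolding expected_round_loss_def expected_margin by linarith
qed

lemma expected_losses_eq:
  "(\<Sum>t<T. measure_pmf.expectation (states t) (\<lambda>S. suffered_loss S (Suc t) i)) =
   measure_pmf.expectation (prefix_run T) (\<lambda>x. \<Sum>t<T. expected_round_loss (snd x) t)"
proof -
  have "measure_pmf.expectation (states t) (\<lambda>S. suffered_loss S (Suc t) i) =
      measure_pmf.expectation (prefix_run T) (\<lambda>x. expected_round_loss (snd x) t)" if "t < T" for t
    unfolding expected_round_loss_def suffered_loss_def boost_loss_def
    using that abs_prediction_margin_le[OF learner, of "Suc t"]
    by (intro expectation_point_mult) auto
  moreover have "integrable (measure_pmf (prefix_run T)) (\<lambda>x. expected_round_loss (snd x) t)" if "t < T" for t
    using that prefix_run_points_range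
    by (intro integrable_measure_pmf_bounded[where B="1 + 1 / \<gamma>"] abs_expected_round_loss_le) auto
  ultimately show ?thesis
    by (simp add: Bochner_Integration.integral_sum)
qed

lemma expected_losses_ge:
  assumes awol: "awol (W i) \<gamma> T RW H" and h: "h \<in> H" and H_pm1: "\<forall>h\<in>H. \<forall>x. h x \<in> {-1, 1}"
  shows "(\<Sum>t<T. h (xs (Suc t)) * ys (Suc t) - 1) - RW T / \<gamma> \<le>
    (\<Sum>t<T. measure_pmf.expectation (states t) (\<lambda>S. suffered_loss S (Suc t) i))"
  unfolding expected_losses_eq
proof (rule measure_pmf.integral_ge_const)
  have "\<bar>\<Sum>t<T. expected_round_loss (snd x) t\<bar> \<le> T * (1 + 1 / \<gamma>)" if "x \<in> set_pmf (prefix_run T)" for x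
  proof -
    have "\<bar>\<Sum>t<T. expected_round_loss (snd x) t\<bar> \<le> (\<Sum>t<T. \<bar>expected_round_loss (snd x) t\<bar>)"
      by (rule sum_abs)
    also have "\<dots> \<le> (\<Sum>t<T. 1 + 1 / \<gamma>)"
      using that prefix_run_points_range by (intro sum_mono abs_expected_round_loss_le) auto
    finally show ?thesis by simp
  qed
  then show "integrable (measure_pmf (prefix_run T)) (\<lambda>x. \<Sum>t<T. expected_round_loss (snd x) t)"
    by (rule integrable_measure_pmf_bounded)
  show "AE x in measure_pmf (prefix_run T).
      (\<Sum>t<T. h (xs (Suc t)) * ys (Suc t) - 1) - RW T / \<gamma> \<le> (\<Sum>t<T. expected_round_loss (snd x) t)"
    using losses_against_points_ge[OF awol h H_pm1 prefix_run_points_range] by (intro AE_pmfI)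
qed

end

lemma expected_regret_le:
  assumes weak: "\<And>i. i \<in> {1..N} \<Longrightarrow> awol (W i) \<gamma> T RW H" and H_pm1: "\<forall>h\<in>H. \<forall>x. h x \<in> {-1, 1}"
    and h: "h \<in> H" and oco: "oco A N R B" and B: "B \<ge> 1 + 1 / \<gamma>" and A_Nil: "A [] = 0" and N: "N > 0"
  shows "(\<Sum>t<T. h (xs (Suc t)) * ys (Suc t)) - measure_pmf.expectation (boost_run W A \<gamma> N xs ys T) snd
    \<le> T * (R / N) + RW T / \<gamma>"
proof -
  let ?L = "\<lambda>t i. measure_pmf.expectation (states t) (\<lambda>S. suffered_loss S (Suc t) i)"
  let ?regret = "(\<Sum>t<T. h (xs (Suc t)) * ys (Suc t) - 1) - RW T / \<gamma>"
  have "?regret \<le> (\<Sum>t<T. ?L t i)" if "i \<in> {1..N}" for i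
    by (rule expected_losses_ge[OF that weak[OF that] h H_pm1])
  then have "N * ?regret \<le> (\<Sum>i=1..N. \<Sum>t<T. ?L t i)"
    using sum_mono[of "{1..N}" "\<lambda>_. ?regret" "\<lambda>i. \<Sum>t<T. ?L t i"] by simp
  then have "?regret \<le> (1 / N) * (\<Sum>i=1..N. \<Sum>t<T. ?L t i)"
    using N by (simp add: pos_le_divide_eq mult.commute)
  then have "T * (1 - R / N) + ?regret \<le> T * (1 - R / N) + (1 / N) * (\<Sum>i=1..N. \<Sum>t<T. ?L t i)"
    by simp
  also have "\<dots> = (\<Sum>t<T. 1 - R / N + (1 / N) * (\<Sum>i=1..N. ?L t i))"
    by (simp add: sum.distrib sum_distrib_left) (rule sum.swap)
  also have "\<dots> \<le> (\<Sum>t<T. measure_pmf.expectation (states t)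
      (\<lambda>S. measure_pmf.expectation (proj_pmf (vote S (Suc t))) (\<lambda>v. v) * ys (Suc t)))"
    by (intro sum_mono expected_margin_ge[OF oco B A_Nil N]) auto
  also have "\<dots> = measure_pmf.expectation (boost_run W A \<gamma> N xs ys T) snd"
    by (rule expectation_payoff[symmetric])
  finally show ?thesis
    by (simp add: sum_subtractf algebra_simps)
qed

end

theorem proposition3:
  fixes H :: "('x \<Rightarrow> real) set"
    and W :: "nat \<Rightarrow> ('s, 'x) learner"
    and A :: "(real \<Rightarrow> real) list \<Rightarrow> real"
    and RW RA :: "nat \<Rightarrow> real"
    and T N :: nat and \<gamma> B :: real
    and xs :: "nat \<Rightarrow> 'x" and ys :: "nat \<Rightarrow> real"
  assumes H_pm1: "\<forall>h\<in>H. \<forall>x. h x \<in> {-1, 1}"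
    and H_ne: "H \<noteq> {}"
    and T_pos: "T > 0" and N_pos: "N > 0"
    and gamma_pos: "\<gamma> > 0"
    and weak: "\<forall>i\<in>{1..N}. awol (W i) \<gamma> T RW H"
    and A_oco: "oco A N (RA N) B"
    and B_ge: "B \<ge> 1 + 1 / \<gamma>"
    and A_init: "A [] = 0"
    and ys_pm1: "\<forall>t\<in>{1..T}. ys t \<in> {-1, 1}"
  shows "(1 / real T) *
           measure_pmf.expectation (boost_run W A \<gamma> N xs ys T)
             (\<lambda>(S, acc). (SUP h\<in>H. \<Sum>t=1..T. h (xs t) * ys t) - acc)
         \<le> RW T / (\<gamma> * real T) + RA N / real N"
proof -
  interpret online_boosting W A \<gamma> N T xs ys
    by unfold_locales (use weak A_oco ys_pm1 gamma_pos in \<open>auto simp: awol_def oco_def\<close>)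
  let ?run = "boost_run W A \<gamma> N xs ys T"
  define best where "best = (SUP h\<in>H. \<Sum>t=1..T. h (xs t) * ys t)"
  have "(\<Sum>t=1..T. h (xs t) * ys t) \<le> T * (RA N / N) + RW T / \<gamma> + measure_pmf.expectation ?run snd"
    if "h \<in> H" for h
    using expected_regret_le[OF weak[rule_format] H_pm1 that A_oco B_ge A_init N_pos]
    by (simp add: sum.atLeast1_atMost_eq)
  then have "best \<le> T * (RA N / N) + RW T / \<gamma> + measure_pmf.expectation ?run snd"
    unfolding best_def using H_ne by (intro cSUP_least) auto
  moreover have "integrable (measure_pmf ?run) snd"
    using abs_payoff_le by (rule integrable_measure_pmf_bounded)
  ultimately have "measure_pmf.expectation ?run (\<lambda>(S, acc). best - acc) \<le> T * (RA N / N) + RW T / \<gamma>"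
    by (simp add: case_prod_unfold)
  then have "(1 / T) * measure_pmf.expectation ?run (\<lambda>(S, acc). best - acc) \<le>
      (1 / T) * (T * (RA N / N) + RW T / \<gamma>)"
    by (intro mult_left_mono) auto
  also have "\<dots> = RW T / (\<gamma> * T) + RA N / N"
    using T_pos by (simp add: field_simps)
  finally show ?thesis
    unfolding best_def .
qed

end
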